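(* Let $\mathcal{H}_1\cong \mathrm{Bl}_p\mathbb{P}^2$ be the first Hirzebruch surface, with Cox ring $S=\mathbb{C}[x_1,x_2,x_3,x_4]$ graded by $\operatorname{Pic}(\mathcal{H}_1)=\mathbb{Z}D_1\oplus\mathbb{Z}D_2$, where $D_1$ is the fiber divisor and $D_2$ is the exceptional divisor. For every integer $d$ with $5\le d\le 10$, there exists a nondegenerate $f\in S_{\beta}$, $\beta=dD_1+3D_2$, whose zero locus $C$ (a smooth curve of genus $g=2d-5$) admits a first order deformation inside the linear system $|\beta|$ on $\mathcal{H}_1$ of rank $g$; that is, there exists $\eta\in S_\beta$ such that the multiplication map $\cdot\eta: R_1(f)_{\beta+K}\to R_1(f)_{2\beta+K}$ has rank $g$, where $K=K_{\mathcal{H}_1}$.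
   Context: $\mathcal{H}_1$ is the smooth complete toric surface whose fan has ray generators $u_1=(-1,1)$, $u_2=(0,1)$, $u_3=(1,0)$, $u_4=(0,-1)$, with torus-invariant prime divisors $D_1,\dots,D_4$ and corresponding Cox ring variables $x_1,\dots,x_4$. In $\operatorname{Pic}$ one has $D_3=D_1$, $D_4=D_1+D_2$; so $\deg x_1=\deg x_3=D_1$, $\deg x_2=D_2$, $\deg x_4=D_1+D_2$. For a class $\alpha$, $S_\alpha$ is the span of monomials of degree $\alpha$, and $S_\alpha\cong H^0(\mathcal{O}(\alpha))$. The canonical class is $K=-D_1-D_2-D_3-D_4=-3D_1-2D_2$. A polynomial $f\in S_\beta$ with $\beta$ ample is nondegenerate if the polynomials $x_i\,\partial f/\partial x_i$ ($i=1,\dots,4$) have no common zero on the toric surface (equivalently, $\{f=0\}$ meets every torus orbit in a smooth subvariety of codimension one). Set $J_0(f)=\langle x_i\,\partial f/\partial x_i\rangle_{i}\subset S$, $J_1(f)=J_0(f):\langle x_1x_2x_3x_4\rangle=\{h\in S: h\,x_1x_2x_3x_4\in J_0(f)\}$, $R_1(f)=S/J_1(f)$ with the induced grading. By Batyrev–Cox, $H^0(C,\omega_C)\cong R_1(f)_{\beta+K}$ and $H^1(C,\mathcal{O}_C)\cong R_1(f)_{2\beta+K}$, and under these identifications the infinitesimal variation of Hodge structure of a first order deformation of $C$ in $|\beta|$ given by $\eta\in S_\beta$ is (up to a nonzero constant) multiplication by $\eta$; its rank is the rank of this map. *)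

theory Defs
  imports Complex_Main "HOL-Library.Poly_Mapping" "HOL-Library.Product_Plus"
begin

text \<open>A monomial x1^a x2^b x3^c x4^d is its exponent vector (a,b,c,d);
  a polynomial is a finitely supported map from exponent vectors to complex
  coefficients (multiplication = convolution, from Poly_Mapping).\<close>

type_synonym expo = "nat \<times> nat \<times> nat \<times> nat"
type_synonym cpoly = "expo \<Rightarrow>\<^sub>0 complex"

text \<open>Pic(H_1) = Z D1 + Z D2 written as int pairs (coefficients of D1, D2).
  deg x1 = deg x3 = D1, deg x2 = D2, deg x4 = D1 + D2.\<close>

definition D1 :: "int \<times> int" where "D1 = (1, 0)"
definition D2 :: "int \<times> int" where "D2 = (0, 1)"

definition scale_deg :: "nat \<Rightarrow> int \<times> int \<Rightarrow> int \<times> int" where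
  "scale_deg n v = (int n * fst v, int n * snd v)"

definition var_deg :: "nat \<Rightarrow> int \<times> int" where
  "var_deg i = (if i = 1 then D1 else if i = 2 then D2 else if i = 3 then D1 else D1 + D2)"

definition expo_deg :: "expo \<Rightarrow> int \<times> int" where
  "expo_deg e = (case e of (a, b, c, d) \<Rightarrow>
     scale_deg a (var_deg 1) + scale_deg b (var_deg 2) + scale_deg c (var_deg 3) + scale_deg d (var_deg 4))"

definition canonical_class :: "int \<times> int" where
  "canonical_class = - (var_deg 1 + var_deg 2 + var_deg 3 + var_deg 4)"

definition S_deg :: "int \<times> int \<Rightarrow> cpoly set" where
  "S_deg \<alpha> = {p. \<forall>e \<in> Poly_Mapping.keys p. expo_deg e = \<alpha>}"

definition exp_at :: "nat \<Rightarrow> expo \<Rightarrow> nat" where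
  "exp_at i e = (case e of (a, b, c, d) \<Rightarrow>
     (if i = 1 then a else if i = 2 then b else if i = 3 then c else d))"

definition var :: "nat \<Rightarrow> cpoly" where
  "var i = Poly_Mapping.single
     (if i = 1 then (1,0,0,0) else if i = 2 then (0,1,0,0) else if i = 3 then (0,0,1,0) else (0,0,0,1)) 1"

definition cscale :: "complex \<Rightarrow> cpoly \<Rightarrow> cpoly" where
  "cscale c p = Poly_Mapping.map (\<lambda>a. c * a) p"

text \<open>The Euler-type derivative x_i * d f / d x_i : monomial x^e is sent to e_i x^e.\<close>
definition xdiff :: "nat \<Rightarrow> cpoly \<Rightarrow> cpoly" where
  "xdiff i f = Abs_poly_mapping (\<lambda>e. of_nat (exp_at i e) * Poly_Mapping.lookup f e)"

definition peval :: "cpoly \<Rightarrow> complex \<times> complex \<times> complex \<times> complex \<Rightarrow> complex" where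
  "peval p z = (case z of (z1, z2, z3, z4) \<Rightarrow>
     (\<Sum>e\<in>Poly_Mapping.keys p. Poly_Mapping.lookup p e *
        (case e of (a, b, c, d) \<Rightarrow> z1 ^ a * z2 ^ b * z3 ^ c * z4 ^ d)))"

text \<open>Exceptional set Z = V(x3x4, x4x1, x1x2, x2x3) = {x1=x3=0} \<union> {x2=x4=0};
  points of H_1 are G-orbits of C^4 - Z. Since the x_i df/dx_i are quasi-homogeneous,
  a common zero on H_1 is a common zero in C^4 - Z.\<close>
definition exceptional_set :: "(complex \<times> complex \<times> complex \<times> complex) set" where
  "exceptional_set = {(z1, z2, z3, z4). (z1 = 0 \<and> z3 = 0) \<or> (z2 = 0 \<and> z4 = 0)}"

definition nondegenerate :: "cpoly \<Rightarrow> bool" where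
  "nondegenerate f \<longleftrightarrow>
     (\<forall>z. (\<forall>i\<in>{1,2,3,4}. peval (xdiff i f) z = 0) \<longrightarrow> z \<in> exceptional_set)"

definition J0 :: "cpoly \<Rightarrow> cpoly set" where
  "J0 f = {p. \<exists>a :: nat \<Rightarrow> cpoly. p = (\<Sum>i\<in>{1,2,3,4}. a i * xdiff i f)}"

definition J1 :: "cpoly \<Rightarrow> cpoly set" where
  "J1 f = {h. h * (var 1 * var 2 * var 3 * var 4) \<in> J0 f}"

text \<open>Rank of the map R_1(f)_{beta+K} -> R_1(f)_{2 beta+K} induced by multiplication
  with eta: the dimension of its image, i.e. the largest n such that there are
  h_1..h_n in S_{beta+K} whose products with eta are linearly independent modulo J_1(f)
  (as elements of R_1(f)_{2 beta+K} = S_{2 beta+K} / (J_1(f) \<inter> S_{2 beta+K})).\<close>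
definition lin_indep_mod :: "cpoly set \<Rightarrow> (nat \<Rightarrow> cpoly) \<Rightarrow> nat \<Rightarrow> bool" where
  "lin_indep_mod W v n \<longleftrightarrow>
     (\<forall>c :: nat \<Rightarrow> complex. (\<Sum>i<n. cscale (c i) (v i)) \<in> W \<longrightarrow> (\<forall>i<n. c i = 0))"

definition IVHS_rank :: "int \<times> int \<Rightarrow> cpoly \<Rightarrow> cpoly \<Rightarrow> nat" where
  "IVHS_rank \<beta> f \<eta> = (GREATEST n. \<exists>h :: nat \<Rightarrow> cpoly.
      (\<forall>i<n. h i \<in> S_deg (\<beta> + canonical_class)) \<and>
      lin_indep_mod (J1 f) (\<lambda>i. \<eta> * h i) n)"

end

theory Submission
  imports Defs "HOL-Library.Product_Order"
begin

(* Take f = x1^d x2^3 + x2^3 x3^d + x1^(d-3) x4^3 + x3^(d-3) x4^3 and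
   eta = x2^3 x3^d + x1 x2^2 x3^(d-2) x4.  At a common zero (a, b, c, e) of the x_i df/dx_i we get
   b^3 (a^d + c^d) = 0 and e^3 (a^(d-3) + c^(d-3)) = 0; if b e <> 0 these force a^3 = c^3 and then
   a = c = 0, and if b = 0 or e = 0 the other two derivatives force a = c = 0, so f is
   nondegenerate.  S_(beta+K) = S_(d-3,1) is spanned by its 2d - 5 monomials m_i, which bounds the
   rank by g = 2d - 5.  Conversely, for every k there is a linear functional lambda_k with integer
   coefficients that kills all multiples of all x_i df/dx_i, so that h |-> lambda_k(x1 x2 x3 x4 h)
   vanishes on J_1(f), while lambda_k(x1 x2 x3 x4 eta m_i) <> 0 exactly for i = k; hence the
   classes of the eta m_i are independent.  The functionals were found by exact linear algebra and
   are checked here by evaluation, separately for each d. *)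

section \<open>Polynomials and linear functionals from integer term lists\<close>

definition poly_of_terms :: "(expo \<times> int) list \<Rightarrow> cpoly" where
  "poly_of_terms ts = (\<Sum>(e, c)\<leftarrow>ts. Poly_Mapping.single e (of_int c))"

definition coeff_of_terms :: "(expo \<times> int) list \<Rightarrow> expo \<Rightarrow> int" where
  "coeff_of_terms ts e = (\<Sum>(k, c)\<leftarrow>ts. if k = e then c else 0)"

definition functional_of_terms :: "(expo \<times> int) list \<Rightarrow> cpoly \<Rightarrow> complex" where
  "functional_of_terms ts p = (\<Sum>(k, c)\<leftarrow>ts. of_int c * Poly_Mapping.lookup p k)"

definition functional_on_multiple ::
  "(expo \<times> int) list \<Rightarrow> (expo \<times> int) list \<Rightarrow> expo \<Rightarrow> int" where
  "functional_on_multiple ts gs e = (\<Sum>(k, c)\<leftarrow>gs. c * coeff_of_terms ts (e + k))"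

lemma poly_of_terms_simps [simp]:
  "poly_of_terms [] = 0"
  "poly_of_terms ((e, c) # ts) = Poly_Mapping.single e (of_int c) + poly_of_terms ts"
  by (simp_all add: poly_of_terms_def)

lemma coeff_of_terms_simps [simp]:
  "coeff_of_terms [] e = 0"
  "coeff_of_terms ((k, c) # ts) e = (if k = e then c else 0) + coeff_of_terms ts e"
  by (simp_all add: coeff_of_terms_def)

lemma functional_of_terms_simps [simp]:
  "functional_of_terms [] p = 0"
  "functional_of_terms ((k, c) # ts) p =
     of_int c * Poly_Mapping.lookup p k + functional_of_terms ts p"
  by (simp_all add: functional_of_terms_def)

lemma lookup_poly_of_terms:
  "Poly_Mapping.lookup (poly_of_terms ts) e = of_int (coeff_of_terms ts e)"
  by (induction ts) (auto simp: lookup_add lookup_single)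

lemma coeff_of_terms_nonzero: "coeff_of_terms ts e \<noteq> 0 \<Longrightarrow> e \<in> fst ` set ts"
  by (induction ts) (auto split: if_splits)

lemma keys_poly_of_terms: "Poly_Mapping.keys (poly_of_terms ts) \<subseteq> fst ` set ts"
  using coeff_of_terms_nonzero by (auto simp: in_keys_iff lookup_poly_of_terms)

lemma poly_of_terms_in_S_deg:
  "(\<And>t. t \<in> set ts \<Longrightarrow> expo_deg (fst t) = \<alpha>) \<Longrightarrow> poly_of_terms ts \<in> S_deg \<alpha>"
  using keys_poly_of_terms by (fastforce simp: S_deg_def)

lemma poly_mapping_sum_singles:
  "p = (\<Sum>e\<in>Poly_Mapping.keys p. Poly_Mapping.single e (Poly_Mapping.lookup p e))"
  by (rule poly_mapping_eqI) (auto simp: lookup_sum lookup_single when_def in_keys_iff)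

lemma cscale_eq_single_mult: "cscale c p = Poly_Mapping.single 0 c * p"
  unfolding cscale_def by (rule mult_map_scale_conv_mult)

lemma cscale_mult: "cscale c p * q = cscale c (p * q)"
  by (simp add: cscale_eq_single_mult mult.assoc)

interpretation cpoly: vector_space cscale
  by unfold_locales
    (simp_all add: cscale_eq_single_mult distrib_left distrib_right single_add mult_single
      flip: mult.assoc)

(* A lemma rather than an interpretation: the interpretation's simp rules, such as
   a * (b * x) = (a * b) * x, make simp loop together with algebra_simps. *)
lemma vector_space_complex_mult: "vector_space ((*) :: complex \<Rightarrow> complex \<Rightarrow> complex)"
  by unfold_locales (simp_all add: algebra_simps)

lemma functional_of_terms_zero [simp]: "functional_of_terms ts 0 = 0"
  by (induction ts) auto

lemma functional_of_terms_add:
  "functional_of_terms ts (p + q) = functional_of_terms ts p + functional_of_terms ts q"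
  by (induction ts) (auto simp: lookup_add algebra_simps)

lemma lookup_cscale: "Poly_Mapping.lookup (cscale c p) k = c * Poly_Mapping.lookup p k"
  by (simp add: cscale_def Poly_Mapping.map.rep_eq when_def)

lemma functional_of_terms_cscale:
  "functional_of_terms ts (cscale c p) = c * functional_of_terms ts p"
  by (induction ts) (auto simp: lookup_cscale distrib_left mult.left_commute)

lemma functional_of_terms_single:
  "functional_of_terms ts (Poly_Mapping.single k a) = a * of_int (coeff_of_terms ts k)"
  by (induction ts) (auto simp: lookup_single when_def algebra_simps)

lemma linear_functional_of_terms_mult:
  "Vector_Spaces.linear cscale (*) (\<lambda>p. functional_of_terms ts (p * q))"
  by (simp add: Vector_Spaces.linear_iff cpoly.vector_space_axioms vector_space_complex_mult
      functional_of_terms_add functional_of_terms_cscale distrib_right cscale_mult)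

lemma functional_of_terms_single_mult:
  "functional_of_terms ts (Poly_Mapping.single e a * poly_of_terms gs) =
     a * of_int (functional_on_multiple ts gs e)"
  by (induction gs)
    (auto simp: functional_on_multiple_def distrib_left mult_single functional_of_terms_add
      functional_of_terms_single algebra_simps)

lemma functional_of_terms_sum:
  "functional_of_terms ts (sum g A) = (\<Sum>x\<in>A. functional_of_terms ts (g x))"
  by (induction A rule: infinite_finite_induct) (auto simp: functional_of_terms_add)

(* Only shifts e = s - k with x^s in the support of ts and x^k in that of gs can give a nonzero
   value on x^e gs, so this finite check suffices.  It is phrased with list_all and a disjunction
   because code_simp evaluates these far faster than bounded quantifiers and implications. *)
definition annihilates_multiples :: "(expo \<times> int) list \<Rightarrow> (expo \<times> int) list \<Rightarrow> bool" where
  "annihilates_multiples ts gs \<longleftrightarrow>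
     list_all (\<lambda>(s, _). list_all (\<lambda>(k, _).
        \<not> k \<le> s \<or> functional_on_multiple ts gs (s - k) = 0) gs) ts"

lemma expo_add_diff_cancel: "(e + k) - k = e" "k \<le> e + k" for e k :: expo
  by (cases e; cases k; simp)+

lemma functional_on_multiple_eq_0:
  assumes "annihilates_multiples ts gs"
  shows "functional_on_multiple ts gs e = 0"
proof (cases "\<exists>(k, c)\<in>set gs. coeff_of_terms ts (e + k) \<noteq> 0")
  case True
  then obtain k c where gs: "(k, c) \<in> set gs" and nz: "coeff_of_terms ts (e + k) \<noteq> 0"
    by blast
  from coeff_of_terms_nonzero[OF nz] obtain s where ts: "(e + k, s) \<in> set ts"
    by (metis imageE prod.collapse)
  have "\<forall>(k', _)\<in>set gs. \<not> k' \<le> e + k \<or>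
      functional_on_multiple ts gs ((e + k) - k') = 0"
    using bspec[OF assms[unfolded annihilates_multiples_def list_all_iff] ts]
    by (simp add: list_all_iff)
  from bspec[OF this gs] show ?thesis by (simp add: expo_add_diff_cancel)
next
  case False
  then show ?thesis unfolding functional_on_multiple_def
    by (induction gs) (simp_all add: case_prod_beta)
qed

lemma functional_of_terms_mult_eq_0:
  assumes "annihilates_multiples ts gs"
  shows "functional_of_terms ts (a * poly_of_terms gs) = 0"
proof -
  have "functional_of_terms ts (a * poly_of_terms gs) = functional_of_terms ts
      ((\<Sum>e\<in>Poly_Mapping.keys a. Poly_Mapping.single e (Poly_Mapping.lookup a e)) *
        poly_of_terms gs)"
    by (simp only: poly_mapping_sum_singles[of a, symmetric])
  then show ?thesis
    by (simp add: sum_distrib_right functional_of_terms_sum functional_of_terms_single_mult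
        functional_on_multiple_eq_0[OF assms])
qed

definition euler_terms :: "nat \<Rightarrow> (expo \<times> int) list \<Rightarrow> (expo \<times> int) list" where
  "euler_terms i ts = map (\<lambda>(k, c). (k, int (exp_at i k) * c)) ts"

lemma lookup_xdiff:
  "Poly_Mapping.lookup (xdiff i p) e = of_nat (exp_at i e) * Poly_Mapping.lookup p e"
proof -
  have "finite {e. of_nat (exp_at i e) * Poly_Mapping.lookup p e \<noteq> 0}"
    by (rule finite_subset[OF _ finite_lookup[of p]]) auto
  then show ?thesis by (simp add: xdiff_def lookup_Abs_poly_mapping)
qed

lemma xdiff_poly_of_terms: "xdiff i (poly_of_terms ts) = poly_of_terms (euler_terms i ts)"
proof -
  have "coeff_of_terms (euler_terms i ts) e = int (exp_at i e) * coeff_of_terms ts e" for e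
    by (induction ts) (auto simp: euler_terms_def algebra_simps)
  then show ?thesis by (intro poly_mapping_eqI) (simp add: lookup_xdiff lookup_poly_of_terms)
qed

lemma functional_of_terms_vanishes_on_J0:
  assumes "\<forall>i\<in>{1, 2, 3, 4}. annihilates_multiples ts (euler_terms i fs)"
    and "p \<in> J0 (poly_of_terms fs)"
  shows "functional_of_terms ts p = 0"
proof -
  obtain a where "p = (\<Sum>i\<in>{1, 2, 3, 4}. a i * xdiff i (poly_of_terms fs))"
    using assms(2) by (auto simp: J0_def)
  then have "functional_of_terms ts p =
      (\<Sum>i\<in>{1, 2, 3, 4}. functional_of_terms ts (a i * poly_of_terms (euler_terms i fs)))"
    by (simp only: functional_of_terms_sum xdiff_poly_of_terms)
  also have "\<dots> = 0"
    using assms(1) by (intro sum.neutral ballI functional_of_terms_mult_eq_0) blast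
  finally show ?thesis .
qed

section \<open>Nondegeneracy of the curve\<close>

definition monomial_value :: "expo \<Rightarrow> complex \<times> complex \<times> complex \<times> complex \<Rightarrow> complex" where
  "monomial_value e z = (case z of (z1, z2, z3, z4) \<Rightarrow>
     case e of (a, b, c, d) \<Rightarrow> z1 ^ a * z2 ^ b * z3 ^ c * z4 ^ d)"

lemma peval_eq_sum_over_superset:
  assumes "finite A" "Poly_Mapping.keys p \<subseteq> A"
  shows "peval p z = (\<Sum>e\<in>A. Poly_Mapping.lookup p e * monomial_value e z)"
proof -
  have "peval p z = (\<Sum>e\<in>Poly_Mapping.keys p. Poly_Mapping.lookup p e * monomial_value e z)"
    by (cases z) (simp add: peval_def monomial_value_def)
  also have "\<dots> = (\<Sum>e\<in>A. Poly_Mapping.lookup p e * monomial_value e z)"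
    by (rule sum.mono_neutral_left) (use assms in \<open>auto simp: in_keys_iff\<close>)
  finally show ?thesis .
qed

lemma peval_add: "peval (p + q) z = peval p z + peval q z"
proof -
  let ?A = "Poly_Mapping.keys p \<union> Poly_Mapping.keys q"
  have "Poly_Mapping.keys (p + q) \<subseteq> ?A" by (rule keys_add)
  then show ?thesis
    by (simp add: peval_eq_sum_over_superset[of ?A] lookup_add distrib_right sum.distrib)
qed

lemma peval_single: "peval (Poly_Mapping.single e a) z = a * monomial_value e z"
  by (simp add: peval_eq_sum_over_superset[of "{e}"])

lemma peval_poly_of_terms:
  "peval (poly_of_terms ts) z = (\<Sum>(e, c)\<leftarrow>ts. of_int c * monomial_value e z)"
  by (induction ts) (auto simp: peval_add peval_single peval_eq_sum_over_superset[of "{}"])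

lemma peval_xdiff_poly_of_terms:
  "peval (xdiff i (poly_of_terms ts)) z =
     (\<Sum>(e, c)\<leftarrow>ts. of_nat (exp_at i e) * of_int c * monomial_value e z)"
  unfolding xdiff_poly_of_terms peval_poly_of_terms euler_terms_def
  by (simp add: comp_def case_prod_unfold)

lemma power_sums_eq_0_imp_eq_0:
  fixes x y :: "'a :: field_char_0"
  assumes "x ^ (n + 3) + y ^ (n + 3) = 0" and "x ^ n + y ^ n = 0"
  shows "x = 0 \<and> y = 0"
proof (cases "y = 0")
  case True
  with assms(2) show ?thesis by (cases "n = 0") (simp_all add: power_0_left)
next
  case False
  have xn: "x ^ n = - (y ^ n)" using assms(2) by (simp add: eq_neg_iff_add_eq_0)
  have "y ^ n * x ^ 3 = - (x ^ n * x ^ 3)" by (simp add: xn)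
  also have "\<dots> = y ^ (n + 3)" using assms(1) by (simp add: power_add add_eq_0_iff)
  also have "\<dots> = y ^ n * y ^ 3" by (simp add: power_add)
  finally have "x ^ 3 = y ^ 3" using False by simp
  then have "(x ^ n) ^ 3 = (y ^ n) ^ 3" by (simp flip: power_mult) (metis power_mult mult.commute)
  then have "(y ^ n) ^ 3 = 0" by (simp add: xn)
  with False show ?thesis by simp
qed

definition curve_terms :: "nat \<Rightarrow> (expo \<times> int) list" where
  "curve_terms d =
     [((d, 3, 0, 0), 1), ((0, 3, d, 0), 1), ((d - 3, 0, 0, 3), 1), ((0, 0, d - 3, 3), 1)]"

lemma nondegenerate_curve:
  assumes "4 \<le> d"
  shows "nondegenerate (poly_of_terms (curve_terms d))"
  unfolding nondegenerate_def
proof (intro allI impI)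
  fix z :: "complex \<times> complex \<times> complex \<times> complex"
  assume H: "\<forall>i\<in>{1, 2, 3, 4}. peval (xdiff i (poly_of_terms (curve_terms d))) z = 0"
  obtain a b c e where z: "z = (a, b, c, e)" by (cases z)
  define n where "n = d - 3"
  have d: "d = n + 3" and n: "n \<noteq> 0" using assms by (auto simp: n_def)
  have euler: "peval (xdiff i (poly_of_terms (curve_terms d))) z = 0"
    if "i \<in> {1, 2, 3, 4}" for i
    using H that by blast
  note euler_simps = d z curve_terms_def exp_at_def monomial_value_def
  have X1: "(of_nat n + 3) * a ^ (n + 3) * b ^ 3 + of_nat n * a ^ n * e ^ 3 = 0"
    using euler[of 1] unfolding peval_xdiff_poly_of_terms by (simp add: euler_simps mult.assoc)
  have X3: "(of_nat n + 3) * b ^ 3 * c ^ (n + 3) + of_nat n * c ^ n * e ^ 3 = 0"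
    using euler[of 3] unfolding peval_xdiff_poly_of_terms by (simp add: euler_simps mult.assoc)
  have "3 * a ^ (n + 3) * b ^ 3 + 3 * b ^ 3 * c ^ (n + 3) = 0"
    using euler[of 2] unfolding peval_xdiff_poly_of_terms by (simp add: euler_simps mult.assoc)
  then have "3 * b ^ 3 * (a ^ (n + 3) + c ^ (n + 3)) = 0" by (simp add: algebra_simps)
  then have B: "b = 0 \<or> a ^ (n + 3) + c ^ (n + 3) = 0" by simp
  have "3 * a ^ n * e ^ 3 + 3 * c ^ n * e ^ 3 = 0"
    using euler[of 4] unfolding peval_xdiff_poly_of_terms by (simp add: euler_simps mult.assoc)
  then have "3 * e ^ 3 * (a ^ n + c ^ n) = 0" by (simp add: algebra_simps)
  then have E: "e = 0 \<or> a ^ n + c ^ n = 0" by simp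
  have "(of_nat (n + 3) :: complex) \<noteq> 0" by (simp only: of_nat_eq_0_iff)
  then have n3: "(of_nat n + 3 :: complex) \<noteq> 0" by simp
  have "a = 0 \<and> c = 0" if "b \<noteq> 0 \<or> e \<noteq> 0"
  proof (cases "b = 0 \<or> e = 0")
    case True
    then show ?thesis using that X1 X3 n n3 by auto
  next
    case False
    then show ?thesis using B E power_sums_eq_0_imp_eq_0 by blast
  qed
  then show "z \<in> exceptional_set" by (auto simp: exceptional_set_def z)
qed

section \<open>The rank of multiplication by \<eta>\<close>

lemma expo_deg_eq: "expo_deg (a, b, c, e) = (int a + int c + int e, int b + int e)"
  by (simp add: expo_deg_def scale_deg_def var_deg_def D1_def D2_def)

lemma canonical_class_eq: "canonical_class = (-3, -2)"
  by (simp add: canonical_class_def var_deg_def D1_def D2_def)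

lemma scale_deg_D1_plus_scale_deg_D2: "scale_deg a D1 + scale_deg b D2 = (int a, int b)"
  by (simp add: scale_deg_def D1_def D2_def)

definition exponents_of_degree :: "int \<times> int \<Rightarrow> expo set" where
  "exponents_of_degree \<alpha> = {e. expo_deg e = \<alpha>}"

lemma S_deg_iff_keys_subset: "p \<in> S_deg \<alpha> \<longleftrightarrow> Poly_Mapping.keys p \<subseteq> exponents_of_degree \<alpha>"
  by (auto simp: S_deg_def exponents_of_degree_def)

definition monomials_of_degree :: "nat \<Rightarrow> nat \<Rightarrow> expo list" where
  "monomials_of_degree A B =
     concat (map (\<lambda>e. map (\<lambda>a. (a, B - e, A - e - a, e)) [0..<A - e + 1]) [0..<min A B + 1])"

lemma mem_monomials_of_degree:
  "(a, b, c, e) \<in> set (monomials_of_degree A B) \<longleftrightarrow> a + c + e = A \<and> b + e = B"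
proof
  assume "(a, b, c, e) \<in> set (monomials_of_degree A B)"
  then show "a + c + e = A \<and> b + e = B" by (auto simp: monomials_of_degree_def)
next
  assume deg: "a + c + e = A \<and> b + e = B"
  then have "(a, b, c, e) \<in> set (map (\<lambda>a. (a, B - e, A - e - a, e)) [0..<A - e + 1])"
    by (auto simp: image_iff)
  moreover have "e \<in> set [0..<min A B + 1]" using deg by auto
  ultimately show "(a, b, c, e) \<in> set (monomials_of_degree A B)"
    unfolding monomials_of_degree_def set_concat set_map image_image UN_iff by (rule bexI)
qed

lemma set_monomials_of_degree:
  "set (monomials_of_degree A B) = exponents_of_degree (int A, int B)"
  by (auto simp: exponents_of_degree_def expo_deg_eq mem_monomials_of_degree)

lemma zero_in_J1: "0 \<in> J1 f"
  unfolding J1_def J0_def by (auto intro!: exI[of _ "\<lambda>_. 0"])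

lemma in_span_singles:
  assumes "finite M" and "Poly_Mapping.keys p \<subseteq> M"
  shows "p \<in> cpoly.span ((\<lambda>m. Poly_Mapping.single m 1) ` M)"
proof -
  have "p = (\<Sum>e\<in>Poly_Mapping.keys p.
      cscale (Poly_Mapping.lookup p e) (Poly_Mapping.single e 1))"
    by (subst poly_mapping_sum_singles) (simp add: cscale_eq_single_mult mult_single)
  also have "\<dots> \<in> cpoly.span ((\<lambda>m. Poly_Mapping.single m 1) ` M)"
    using assms by (intro cpoly.span_sum cpoly.span_scale cpoly.span_base) auto
  finally show ?thesis .
qed

lemma nontrivial_relation_if_keys_bounded:
  assumes M: "finite M" and keys: "\<And>i. i < n \<Longrightarrow> Poly_Mapping.keys (h i) \<subseteq> M"
    and n: "card M < n"
  obtains c where "(\<Sum>i<n. cscale (c i) (h i)) = 0" and "\<exists>i<n. c i \<noteq> 0"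
proof (cases "inj_on h {..<n}")
  case False
  then obtain i j where ij: "i < n" "j < n" "i \<noteq> j" "h i = h j"
    unfolding inj_on_def by auto
  define c :: "nat \<Rightarrow> complex"
    where "c k = (if k = i then 1 else if k = j then -1 else 0)" for k
  have "(\<Sum>k<n. cscale (c k) (h k)) = (\<Sum>k\<in>{i, j}. cscale (c k) (h k))"
    by (rule sum.mono_neutral_right) (use ij in \<open>auto simp: c_def\<close>)
  also have "\<dots> = 0" using ij by (simp add: c_def)
  finally show ?thesis by (rule that) (use ij in \<open>auto simp: c_def\<close>)
next
  case True
  let ?S = "h ` {..<n}" and ?T = "(\<lambda>m. Poly_Mapping.single m (1 :: complex)) ` M"
  have span: "?S \<subseteq> cpoly.span ?T" using keys in_span_singles[OF M] by auto
  have card: "card ?T < card ?S"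
    using True n card_image_le[OF M, of "\<lambda>m. Poly_Mapping.single m (1 :: complex)"]
    by (simp add: card_image)
  have "cpoly.dependent ?S"
  proof (rule ccontr)
    assume "cpoly.independent ?S"
    with cpoly.independent_span_bound[OF finite_imageI[OF M] _ span] have "card ?S \<le> card ?T"
      by blast
    with card show False by simp
  qed
  then have "\<exists>u. (\<exists>v\<in>?S. u v \<noteq> 0) \<and> (\<Sum>v\<in>?S. cscale (u v) v) = 0"
    by (simp only: cpoly.dependent_finite[OF finite_imageI[OF finite_lessThan]])
  then obtain u where u: "\<exists>v\<in>?S. u v \<noteq> 0" "(\<Sum>v\<in>?S. cscale (u v) v) = 0"
    by (elim exE conjE)
  have "(\<Sum>i<n. cscale (u (h i)) (h i)) = 0"
    using u(2) sum.reindex[OF True, of "\<lambda>v. cscale (u v) v"] by simp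
  with u(1) show ?thesis by (intro that[of "\<lambda>i. u (h i)"]) auto
qed

lemma cscale_mult_left: "cscale c (q * p) = q * cscale c p"
  unfolding cscale_eq_single_mult by (rule mult.left_commute)

lemma lin_indep_mod_length_le_card:
  assumes "finite M" and "\<And>i. i < n \<Longrightarrow> Poly_Mapping.keys (h i) \<subseteq> M" and "0 \<in> W"
    and indep: "lin_indep_mod W (\<lambda>i. q * h i) n"
  shows "n \<le> card M"
proof (rule ccontr)
  assume "\<not> n \<le> card M"
  then have "card M < n" by simp
  with assms(1,2) obtain c where c: "(\<Sum>i<n. cscale (c i) (h i)) = 0" "\<exists>i<n. c i \<noteq> 0"
    by (rule nontrivial_relation_if_keys_bounded)
  have "(\<Sum>i<n. cscale (c i) (q * h i)) = q * (\<Sum>i<n. cscale (c i) (h i))"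
    by (simp only: sum_distrib_left cscale_mult_left)
  with c(1) \<open>0 \<in> W\<close> have "(\<Sum>i<n. cscale (c i) (q * h i)) \<in> W" by simp
  with indep c(2) show False unfolding lin_indep_mod_def by blast
qed

lemma lin_indep_mod_if_dual_functionals:
  assumes linear: "\<And>k. k < n \<Longrightarrow> Vector_Spaces.linear cscale (*) (\<phi> k)"
    and vanish: "\<And>k w. k < n \<Longrightarrow> w \<in> W \<Longrightarrow> \<phi> k w = 0"
    and dual: "\<And>k i. k < n \<Longrightarrow> i < n \<Longrightarrow> \<phi> k (v i) \<noteq> 0 \<longleftrightarrow> i = k"
  shows "lin_indep_mod W v n"
  unfolding lin_indep_mod_def
proof (intro allI impI)
  fix c k
  assume W: "(\<Sum>i<n. cscale (c i) (v i)) \<in> W" and k: "k < n"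
  interpret \<phi>: Vector_Spaces.linear cscale "(*)" "\<phi> k" using linear[OF k] .
  have "0 = \<phi> k (\<Sum>i<n. cscale (c i) (v i))" using vanish[OF k W] by simp
  also have "\<dots> = (\<Sum>i<n. c i * \<phi> k (v i))" by (simp add: \<phi>.sum \<phi>.scale)
  also have "\<dots> = (\<Sum>i<n. if i = k then c k * \<phi> k (v k) else 0)"
    using dual[OF k] by (intro sum.cong) auto
  also have "\<dots> = c k * \<phi> k (v k)" using k by simp
  finally show "c k = 0" using dual[OF k k] by simp
qed

lemma IVHS_rank_eqI:
  fixes \<beta> :: "int \<times> int"
  defines "M \<equiv> exponents_of_degree (\<beta> + canonical_class)"
  assumes fin: "finite M"
    and h: "\<And>i. i < card M \<Longrightarrow> h i \<in> S_deg (\<beta> + canonical_class)"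
    and indep: "lin_indep_mod (J1 f) (\<lambda>i. \<eta> * h i) (card M)"
  shows "IVHS_rank \<beta> f \<eta> = card M"
  unfolding IVHS_rank_def
proof (rule Greatest_equality)
  show "\<exists>h. (\<forall>i<card M. h i \<in> S_deg (\<beta> + canonical_class)) \<and>
      lin_indep_mod (J1 f) (\<lambda>i. \<eta> * h i) (card M)"
    using h indep by blast
next
  fix n
  assume "\<exists>h. (\<forall>i<n. h i \<in> S_deg (\<beta> + canonical_class)) \<and>
    lin_indep_mod (J1 f) (\<lambda>i. \<eta> * h i) n"
  then obtain h' where "\<And>i. i < n \<Longrightarrow> Poly_Mapping.keys (h' i) \<subseteq> M"
    and "lin_indep_mod (J1 f) (\<lambda>i. \<eta> * h' i) n"
    unfolding M_def S_deg_iff_keys_subset by blast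
  then show "n \<le> card M" using lin_indep_mod_length_le_card[OF fin] zero_in_J1 by blast
qed

section \<open>Dual certificates\<close>

lemma var_product: "var 1 * var 2 * var 3 * var 4 = Poly_Mapping.single (1, 1, 1, 1) 1"
  by (simp add: var_def mult_single)

definition deformation_terms :: "nat \<Rightarrow> (expo \<times> int) list" where
  "deformation_terms d = [((0, 3, d, 0), 1), ((1, 2, d - 2, 1), 1)]"

(* The k-th functional of ls is dual to the k-th monomial of degree (d - 3, 1); the shift by
   (1, 1, 1, 1) is the multiplication by x1 x2 x3 x4 in the definition of J_1. *)
definition dual_certificate :: "nat \<Rightarrow> (expo \<times> int) list list \<Rightarrow> bool" where
  "dual_certificate d ls \<longleftrightarrow>
     (let ms = monomials_of_degree (d - 3) 1 in
      length ls = length ms \<and> length ms = 2 * d - 5 \<and> distinct ms \<and>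
      list_all (\<lambda>l. list_all (\<lambda>i. annihilates_multiples l (euler_terms i (curve_terms d)))
        [1, 2, 3, 4]) ls \<and>
      list_all (\<lambda>k. list_all (\<lambda>i.
         functional_on_multiple (ls ! k) (deformation_terms d) (ms ! i + (1, 1, 1, 1)) \<noteq> 0
           \<longleftrightarrow> i = k) [0..<length ms]) [0..<length ms])"

lemma IVHS_rank_eq_genus_if_dual_certificate:
  assumes d: "4 \<le> d" and cert: "dual_certificate d ls"
  shows "\<exists>f \<in> S_deg (scale_deg d D1 + scale_deg 3 D2). nondegenerate f \<and>
           (\<exists>\<eta> \<in> S_deg (scale_deg d D1 + scale_deg 3 D2).
              IVHS_rank (scale_deg d D1 + scale_deg 3 D2) f \<eta> = 2 * d - 5)"
proof -
  define ms where "ms = monomials_of_degree (d - 3) 1"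
  define f where "f = poly_of_terms (curve_terms d)"
  define \<eta> where "\<eta> = poly_of_terms (deformation_terms d)"
  have \<beta>: "scale_deg d D1 + scale_deg 3 D2 = (int d, 3)"
    by (simp add: scale_deg_D1_plus_scale_deg_D2)
  from cert have dist: "distinct ms" and len: "length ms = 2 * d - 5" and "length ls = length ms"
    and ann: "\<forall>l\<in>set ls. \<forall>i\<in>{1, 2, 3, 4}.
      annihilates_multiples l (euler_terms i (curve_terms d))"
    and dual: "\<And>k i. k < length ms \<Longrightarrow> i < length ms \<Longrightarrow>
      functional_on_multiple (ls ! k) (deformation_terms d) (ms ! i + (1, 1, 1, 1)) \<noteq> 0
        \<longleftrightarrow> i = k"
    by (auto simp: dual_certificate_def ms_def Let_def list_all_iff)
  have M: "exponents_of_degree ((int d, 3) + canonical_class) = set ms"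
    using d by (simp add: canonical_class_eq ms_def set_monomials_of_degree of_nat_diff)
  define h where "h i = Poly_Mapping.single (ms ! i) (1 :: complex)" for i
  define \<phi> where "\<phi> k p = functional_of_terms (ls ! k) (p * Poly_Mapping.single (1, 1, 1, 1) 1)"
    for k p
  have indep: "lin_indep_mod (J1 f) (\<lambda>i. \<eta> * h i) (length ms)"
  proof (rule lin_indep_mod_if_dual_functionals)
    show "Vector_Spaces.linear cscale (*) (\<phi> k)" for k
      unfolding \<phi>_def by (rule linear_functional_of_terms_mult)
    show "\<phi> k w = 0" if "k < length ms" and "w \<in> J1 f" for k w
    proof -
      have l: "ls ! k \<in> set ls" using that(1) \<open>length ls = length ms\<close> by simp
      have J0: "w * Poly_Mapping.single (1, 1, 1, 1) 1 \<in> J0 f"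
        using that(2) unfolding J1_def var_product by simp
      show ?thesis
        unfolding \<phi>_def using bspec[OF ann l] J0 unfolding f_def
        by (rule functional_of_terms_vanishes_on_J0)
    qed
    show "\<phi> k (\<eta> * h i) \<noteq> 0 \<longleftrightarrow> i = k" if "k < length ms" and "i < length ms" for k i
    proof -
      have "\<eta> * h i * Poly_Mapping.single (1, 1, 1, 1) 1 =
          Poly_Mapping.single (ms ! i + (1, 1, 1, 1)) 1 * \<eta>"
        by (simp add: h_def mult.assoc mult_single)
      then show ?thesis
        using dual[OF that] by (simp add: \<phi>_def \<eta>_def functional_of_terms_single_mult)
    qed
  qed
  have "IVHS_rank (int d, 3) f \<eta> = card (set ms)"
    unfolding M[symmetric]
  proof (rule IVHS_rank_eqI)
    show "finite (exponents_of_degree ((int d, 3) + canonical_class))" by (simp add: M)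
    show "h i \<in> S_deg ((int d, 3) + canonical_class)"
      if "i < card (exponents_of_degree ((int d, 3) + canonical_class))" for i
      using that dist by (simp add: M h_def S_deg_iff_keys_subset distinct_card)
    show "lin_indep_mod (J1 f) (\<lambda>i. \<eta> * h i)
        (card (exponents_of_degree ((int d, 3) + canonical_class)))"
      using indep dist by (simp add: M distinct_card)
  qed
  then have "IVHS_rank (int d, 3) f \<eta> = 2 * d - 5" using dist len by (simp add: distinct_card)
  moreover have "f \<in> S_deg (int d, 3)"
    unfolding f_def
    by (rule poly_of_terms_in_S_deg) (use d in \<open>auto simp: curve_terms_def expo_deg_eq\<close>)
  moreover have "\<eta> \<in> S_deg (int d, 3)"
    unfolding \<eta>_def
    by (rule poly_of_terms_in_S_deg) (use d in \<open>auto simp: deformation_terms_def expo_deg_eq\<close>)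
  moreover have "nondegenerate f" unfolding f_def using d by (rule nondegenerate_curve)
  ultimately show ?thesis unfolding \<beta> by blast
qed

definition dual_functionals_5 :: "(expo \<times> int) list list" where
  "dual_functionals_5 =
     [[((1, 5, 8, 1), 2), ((3, 5, 6, 1), -2), ((6, 5, 3, 1), -2), ((8, 5, 1, 1), 2),
       ((4, 4, 4, 2), 2), ((1, 2, 5, 4), -5), ((3, 2, 3, 4), 5), ((5, 2, 1, 4), -5)],
      [((0, 5, 9, 1), -2), ((2, 5, 7, 1), 2), ((4, 5, 5, 1), -2), ((5, 5, 4, 1), 2),
       ((7, 5, 2, 1), -2), ((9, 5, 0, 1), 2), ((0, 2, 6, 4), 5), ((2, 2, 4, 4), -5),
       ((4, 2, 2, 4), 5), ((6, 2, 0, 4), -5)],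
      [((4, 4, 4, 2), 1)],
      [((0, 5, 9, 1), -2), ((2, 5, 7, 1), 2), ((4, 5, 5, 1), -2), ((5, 5, 4, 1), 2),
       ((7, 5, 2, 1), -2), ((9, 5, 0, 1), 2), ((1, 4, 7, 2), 2), ((3, 4, 5, 2), -2),
       ((6, 4, 2, 2), -2), ((8, 4, 0, 2), 2), ((0, 2, 6, 4), 5), ((2, 2, 4, 4), -5),
       ((4, 2, 2, 4), 5), ((6, 2, 0, 4), -5), ((1, 1, 4, 5), -5), ((3, 1, 2, 5), 5),
       ((5, 1, 0, 5), -5)],
      [((1, 5, 8, 1), -2), ((3, 5, 6, 1), 2), ((6, 5, 3, 1), 2), ((8, 5, 1, 1), -2),
       ((0, 4, 8, 2), -2), ((2, 4, 6, 2), 2), ((4, 4, 4, 2), -2), ((5, 4, 3, 2), 2),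
       ((7, 4, 1, 2), -2), ((1, 2, 5, 4), 5), ((3, 2, 3, 4), -5), ((5, 2, 1, 4), 5),
       ((0, 1, 5, 5), 5), ((2, 1, 3, 5), -5), ((4, 1, 1, 5), 5)]]"

definition dual_functionals_6 :: "(expo \<times> int) list list" where
  "dual_functionals_6 =
     [[((1, 5, 10, 1), 1), ((4, 5, 7, 1), -1), ((7, 5, 4, 1), -1), ((10, 5, 1, 1), 1),
       ((5, 4, 5, 2), 1), ((1, 2, 7, 4), -2), ((4, 2, 4, 4), 2), ((7, 2, 1, 4), -2)],
      [((2, 5, 9, 1), 1), ((5, 5, 6, 1), -1), ((8, 5, 3, 1), -1), ((11, 5, 0, 1), 1),
       ((2, 2, 6, 4), -2), ((5, 2, 3, 4), 2), ((8, 2, 0, 4), -2)],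
      [((0, 5, 11, 1), -1), ((3, 5, 8, 1), 1), ((6, 5, 5, 1), 1), ((9, 5, 2, 1), -1),
       ((0, 2, 8, 4), 2), ((3, 2, 5, 4), -2), ((6, 2, 2, 4), 2)],
      [((5, 4, 5, 2), 1)],
      [((0, 5, 11, 1), -1), ((3, 5, 8, 1), 1), ((6, 5, 5, 1), 1), ((9, 5, 2, 1), -1),
       ((1, 4, 9, 2), 1), ((4, 4, 6, 2), -1), ((7, 4, 3, 2), -1), ((10, 4, 0, 2), 1),
       ((0, 2, 8, 4), 2), ((3, 2, 5, 4), -2), ((6, 2, 2, 4), 2), ((1, 1, 6, 5), -2),
       ((4, 1, 3, 5), 2), ((7, 1, 0, 5), -2)],
      [((1, 5, 10, 1), -1), ((4, 5, 7, 1), 1), ((7, 5, 4, 1), 1), ((10, 5, 1, 1), -1),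
       ((2, 4, 8, 2), 1), ((5, 4, 5, 2), -1), ((8, 4, 2, 2), -1), ((1, 2, 7, 4), 2),
       ((4, 2, 4, 4), -2), ((7, 2, 1, 4), 2), ((2, 1, 5, 5), -2), ((5, 1, 2, 5), 2)],
      [((2, 5, 9, 1), -1), ((5, 5, 6, 1), 1), ((8, 5, 3, 1), 1), ((11, 5, 0, 1), -1),
       ((0, 4, 10, 2), -1), ((3, 4, 7, 2), 1), ((6, 4, 4, 2), 1), ((9, 4, 1, 2), -1),
       ((2, 2, 6, 4), 2), ((5, 2, 3, 4), -2), ((8, 2, 0, 4), 2), ((0, 1, 7, 5), 2),
       ((3, 1, 4, 5), -2), ((6, 1, 1, 5), 2)]]"

definition dual_functionals_7 :: "(expo \<times> int) list list" where
  "dual_functionals_7 =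
     [[((1, 5, 12, 1), 4), ((5, 5, 8, 1), -4), ((8, 5, 5, 1), -4), ((12, 5, 1, 1), 4),
       ((6, 4, 6, 2), 4), ((1, 2, 9, 4), -7), ((5, 2, 5, 4), 7), ((9, 2, 1, 4), -7)],
      [((2, 5, 11, 1), 4), ((6, 5, 7, 1), -4), ((9, 5, 4, 1), -4), ((13, 5, 0, 1), 4),
       ((2, 2, 8, 4), -7), ((6, 2, 4, 4), 7), ((10, 2, 0, 4), -7)],
      [((3, 5, 10, 1), 4), ((10, 5, 3, 1), -4), ((3, 2, 7, 4), -7), ((7, 2, 3, 4), 7)],
      [((0, 5, 13, 1), -4), ((4, 5, 9, 1), 4), ((7, 5, 6, 1), 4), ((11, 5, 2, 1), -4),
       ((0, 2, 10, 4), 7), ((4, 2, 6, 4), -7), ((8, 2, 2, 4), 7)],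
      [((6, 4, 6, 2), 1)],
      [((0, 5, 13, 1), -4), ((4, 5, 9, 1), 4), ((7, 5, 6, 1), 4), ((11, 5, 2, 1), -4),
       ((1, 4, 11, 2), 4), ((5, 4, 7, 2), -4), ((8, 4, 4, 2), -4), ((12, 4, 0, 2), 4),
       ((0, 2, 10, 4), 7), ((4, 2, 6, 4), -7), ((8, 2, 2, 4), 7), ((1, 1, 8, 5), -7),
       ((5, 1, 4, 5), 7), ((9, 1, 0, 5), -7)],
      [((1, 5, 12, 1), -4), ((5, 5, 8, 1), 4), ((8, 5, 5, 1), 4), ((12, 5, 1, 1), -4),
       ((2, 4, 10, 2), 4), ((6, 4, 6, 2), -4), ((9, 4, 3, 2), -4), ((1, 2, 9, 4), 7),
       ((5, 2, 5, 4), -7), ((9, 2, 1, 4), 7), ((2, 1, 7, 5), -7), ((6, 1, 3, 5), 7)],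
      [((2, 5, 11, 1), -4), ((6, 5, 7, 1), 4), ((9, 5, 4, 1), 4), ((13, 5, 0, 1), -4),
       ((3, 4, 9, 2), 4), ((10, 4, 2, 2), -4), ((2, 2, 8, 4), 7), ((6, 2, 4, 4), -7),
       ((10, 2, 0, 4), 7), ((3, 1, 6, 5), -7), ((7, 1, 2, 5), 7)],
      [((3, 5, 10, 1), -4), ((10, 5, 3, 1), 4), ((0, 4, 12, 2), -4), ((4, 4, 8, 2), 4),
       ((7, 4, 5, 2), 4), ((11, 4, 1, 2), -4), ((3, 2, 7, 4), 7), ((7, 2, 3, 4), -7),
       ((0, 1, 9, 5), 7), ((4, 1, 5, 5), -7), ((8, 1, 1, 5), 7)]]"

definition dual_functionals_8 :: "(expo \<times> int) list list" where
  "dual_functionals_8 =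
     [[((1, 5, 14, 1), 5), ((6, 5, 9, 1), -5), ((9, 5, 6, 1), -5), ((14, 5, 1, 1), 5),
       ((7, 4, 7, 2), 5), ((1, 2, 11, 4), -8), ((6, 2, 6, 4), 8), ((11, 2, 1, 4), -8)],
      [((2, 5, 13, 1), 5), ((7, 5, 8, 1), -5), ((10, 5, 5, 1), -5), ((15, 5, 0, 1), 5),
       ((2, 2, 10, 4), -8), ((7, 2, 5, 4), 8), ((12, 2, 0, 4), -8)],
      [((3, 5, 12, 1), 5), ((11, 5, 4, 1), -5), ((3, 2, 9, 4), -8), ((8, 2, 4, 4), 8)],
      [((4, 5, 11, 1), 5), ((12, 5, 3, 1), -5), ((4, 2, 8, 4), -8), ((9, 2, 3, 4), 8)],
      [((0, 5, 15, 1), -5), ((5, 5, 10, 1), 5), ((8, 5, 7, 1), 5), ((13, 5, 2, 1), -5),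
       ((0, 2, 12, 4), 8), ((5, 2, 7, 4), -8), ((10, 2, 2, 4), 8)],
      [((7, 4, 7, 2), 1)],
      [((0, 5, 15, 1), -5), ((5, 5, 10, 1), 5), ((8, 5, 7, 1), 5), ((13, 5, 2, 1), -5),
       ((1, 4, 13, 2), 5), ((6, 4, 8, 2), -5), ((9, 4, 5, 2), -5), ((14, 4, 0, 2), 5),
       ((0, 2, 12, 4), 8), ((5, 2, 7, 4), -8), ((10, 2, 2, 4), 8), ((1, 1, 10, 5), -8),
       ((6, 1, 5, 5), 8), ((11, 1, 0, 5), -8)],
      [((1, 5, 14, 1), -5), ((6, 5, 9, 1), 5), ((9, 5, 6, 1), 5), ((14, 5, 1, 1), -5),
       ((2, 4, 12, 2), 5), ((7, 4, 7, 2), -5), ((10, 4, 4, 2), -5), ((1, 2, 11, 4), 8),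
       ((6, 2, 6, 4), -8), ((11, 2, 1, 4), 8), ((2, 1, 9, 5), -8), ((7, 1, 4, 5), 8)],
      [((2, 5, 13, 1), -5), ((7, 5, 8, 1), 5), ((10, 5, 5, 1), 5), ((15, 5, 0, 1), -5),
       ((3, 4, 11, 2), 5), ((11, 4, 3, 2), -5), ((2, 2, 10, 4), 8), ((7, 2, 5, 4), -8),
       ((12, 2, 0, 4), 8), ((3, 1, 8, 5), -8), ((8, 1, 3, 5), 8)],
      [((3, 5, 12, 1), -5), ((11, 5, 4, 1), 5), ((4, 4, 10, 2), 5), ((12, 4, 2, 2), -5),
       ((3, 2, 9, 4), 8), ((8, 2, 4, 4), -8), ((4, 1, 7, 5), -8), ((9, 1, 2, 5), 8)],
      [((4, 5, 11, 1), -5), ((12, 5, 3, 1), 5), ((0, 4, 14, 2), -5), ((5, 4, 9, 2), 5),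
       ((8, 4, 6, 2), 5), ((13, 4, 1, 2), -5), ((4, 2, 8, 4), 8), ((9, 2, 3, 4), -8),
       ((0, 1, 11, 5), 8), ((5, 1, 6, 5), -8), ((10, 1, 1, 5), 8)]]"

definition dual_functionals_9 :: "(expo \<times> int) list list" where
  "dual_functionals_9 =
     [[((1, 5, 16, 1), 2), ((7, 5, 10, 1), -2), ((10, 5, 7, 1), -2), ((16, 5, 1, 1), 2),
       ((8, 4, 8, 2), 2), ((1, 2, 13, 4), -3), ((7, 2, 7, 4), 3), ((13, 2, 1, 4), -3)],
      [((2, 5, 15, 1), 2), ((8, 5, 9, 1), -2), ((11, 5, 6, 1), -2), ((17, 5, 0, 1), 2),
       ((2, 2, 12, 4), -3), ((8, 2, 6, 4), 3), ((14, 2, 0, 4), -3)],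
      [((3, 5, 14, 1), 2), ((12, 5, 5, 1), -2), ((3, 2, 11, 4), -3), ((9, 2, 5, 4), 3)],
      [((4, 5, 13, 1), 2), ((13, 5, 4, 1), -2), ((4, 2, 10, 4), -3), ((10, 2, 4, 4), 3)],
      [((5, 5, 12, 1), 2), ((14, 5, 3, 1), -2), ((5, 2, 9, 4), -3), ((11, 2, 3, 4), 3)],
      [((0, 5, 17, 1), -2), ((6, 5, 11, 1), 2), ((9, 5, 8, 1), 2), ((15, 5, 2, 1), -2),
       ((0, 2, 14, 4), 3), ((6, 2, 8, 4), -3), ((12, 2, 2, 4), 3)],
      [((8, 4, 8, 2), 1)],
      [((0, 5, 17, 1), -2), ((6, 5, 11, 1), 2), ((9, 5, 8, 1), 2), ((15, 5, 2, 1), -2),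
       ((1, 4, 15, 2), 2), ((7, 4, 9, 2), -2), ((10, 4, 6, 2), -2), ((16, 4, 0, 2), 2),
       ((0, 2, 14, 4), 3), ((6, 2, 8, 4), -3), ((12, 2, 2, 4), 3), ((1, 1, 12, 5), -3),
       ((7, 1, 6, 5), 3), ((13, 1, 0, 5), -3)],
      [((1, 5, 16, 1), -2), ((7, 5, 10, 1), 2), ((10, 5, 7, 1), 2), ((16, 5, 1, 1), -2),
       ((2, 4, 14, 2), 2), ((8, 4, 8, 2), -2), ((11, 4, 5, 2), -2), ((1, 2, 13, 4), 3),
       ((7, 2, 7, 4), -3), ((13, 2, 1, 4), 3), ((2, 1, 11, 5), -3), ((8, 1, 5, 5), 3)],
      [((2, 5, 15, 1), -2), ((8, 5, 9, 1), 2), ((11, 5, 6, 1), 2), ((17, 5, 0, 1), -2),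
       ((3, 4, 13, 2), 2), ((12, 4, 4, 2), -2), ((2, 2, 12, 4), 3), ((8, 2, 6, 4), -3),
       ((14, 2, 0, 4), 3), ((3, 1, 10, 5), -3), ((9, 1, 4, 5), 3)],
      [((3, 5, 14, 1), -2), ((12, 5, 5, 1), 2), ((4, 4, 12, 2), 2), ((13, 4, 3, 2), -2),
       ((3, 2, 11, 4), 3), ((9, 2, 5, 4), -3), ((4, 1, 9, 5), -3), ((10, 1, 3, 5), 3)],
      [((4, 5, 13, 1), -2), ((13, 5, 4, 1), 2), ((5, 4, 11, 2), 2), ((14, 4, 2, 2), -2),
       ((4, 2, 10, 4), 3), ((10, 2, 4, 4), -3), ((5, 1, 8, 5), -3), ((11, 1, 2, 5), 3)],
      [((5, 5, 12, 1), -2), ((14, 5, 3, 1), 2), ((0, 4, 16, 2), -2), ((6, 4, 10, 2), 2),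
       ((9, 4, 7, 2), 2), ((15, 4, 1, 2), -2), ((5, 2, 9, 4), 3), ((11, 2, 3, 4), -3),
       ((0, 1, 13, 5), 3), ((6, 1, 7, 5), -3), ((12, 1, 1, 5), 3)]]"

definition dual_functionals_10 :: "(expo \<times> int) list list" where
  "dual_functionals_10 =
     [[((1, 5, 18, 1), 7), ((8, 5, 11, 1), -7), ((11, 5, 8, 1), -7), ((18, 5, 1, 1), 7),
       ((9, 4, 9, 2), 7), ((1, 2, 15, 4), -10), ((8, 2, 8, 4), 10), ((15, 2, 1, 4), -10)],
      [((2, 5, 17, 1), 7), ((9, 5, 10, 1), -7), ((12, 5, 7, 1), -7), ((19, 5, 0, 1), 7),
       ((2, 2, 14, 4), -10), ((9, 2, 7, 4), 10), ((16, 2, 0, 4), -10)],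
      [((3, 5, 16, 1), 7), ((13, 5, 6, 1), -7), ((3, 2, 13, 4), -10), ((10, 2, 6, 4), 10)],
      [((4, 5, 15, 1), 7), ((14, 5, 5, 1), -7), ((4, 2, 12, 4), -10), ((11, 2, 5, 4), 10)],
      [((5, 5, 14, 1), 7), ((15, 5, 4, 1), -7), ((5, 2, 11, 4), -10), ((12, 2, 4, 4), 10)],
      [((6, 5, 13, 1), 7), ((16, 5, 3, 1), -7), ((6, 2, 10, 4), -10), ((13, 2, 3, 4), 10)],
      [((0, 5, 19, 1), -7), ((7, 5, 12, 1), 7), ((10, 5, 9, 1), 7), ((17, 5, 2, 1), -7),
       ((0, 2, 16, 4), 10), ((7, 2, 9, 4), -10), ((14, 2, 2, 4), 10)],
      [((9, 4, 9, 2), 1)],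
      [((0, 5, 19, 1), -7), ((7, 5, 12, 1), 7), ((10, 5, 9, 1), 7), ((17, 5, 2, 1), -7),
       ((1, 4, 17, 2), 7), ((8, 4, 10, 2), -7), ((11, 4, 7, 2), -7), ((18, 4, 0, 2), 7),
       ((0, 2, 16, 4), 10), ((7, 2, 9, 4), -10), ((14, 2, 2, 4), 10), ((1, 1, 14, 5), -10),
       ((8, 1, 7, 5), 10), ((15, 1, 0, 5), -10)],
      [((1, 5, 18, 1), -7), ((8, 5, 11, 1), 7), ((11, 5, 8, 1), 7), ((18, 5, 1, 1), -7),
       ((2, 4, 16, 2), 7), ((9, 4, 9, 2), -7), ((12, 4, 6, 2), -7), ((1, 2, 15, 4), 10),
       ((8, 2, 8, 4), -10), ((15, 2, 1, 4), 10), ((2, 1, 13, 5), -10), ((9, 1, 6, 5), 10)],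
      [((2, 5, 17, 1), -7), ((9, 5, 10, 1), 7), ((12, 5, 7, 1), 7), ((19, 5, 0, 1), -7),
       ((3, 4, 15, 2), 7), ((13, 4, 5, 2), -7), ((2, 2, 14, 4), 10), ((9, 2, 7, 4), -10),
       ((16, 2, 0, 4), 10), ((3, 1, 12, 5), -10), ((10, 1, 5, 5), 10)],
      [((3, 5, 16, 1), -7), ((13, 5, 6, 1), 7), ((4, 4, 14, 2), 7), ((14, 4, 4, 2), -7),
       ((3, 2, 13, 4), 10), ((10, 2, 6, 4), -10), ((4, 1, 11, 5), -10), ((11, 1, 4, 5), 10)],
      [((4, 5, 15, 1), -7), ((14, 5, 5, 1), 7), ((5, 4, 13, 2), 7), ((15, 4, 3, 2), -7),
       ((4, 2, 12, 4), 10), ((11, 2, 5, 4), -10), ((5, 1, 10, 5), -10), ((12, 1, 3, 5), 10)],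
      [((5, 5, 14, 1), -7), ((15, 5, 4, 1), 7), ((6, 4, 12, 2), 7), ((16, 4, 2, 2), -7),
       ((5, 2, 11, 4), 10), ((12, 2, 4, 4), -10), ((6, 1, 9, 5), -10), ((13, 1, 2, 5), 10)],
      [((6, 5, 13, 1), -7), ((16, 5, 3, 1), 7), ((0, 4, 18, 2), -7), ((7, 4, 11, 2), 7),
       ((10, 4, 8, 2), 7), ((17, 4, 1, 2), -7), ((6, 2, 10, 4), 10), ((13, 2, 3, 4), -10),
       ((0, 1, 15, 5), 10), ((7, 1, 8, 5), -10), ((14, 1, 1, 5), 10)]]"

lemma dual_certificate_instances:
  "dual_certificate 5 dual_functionals_5" "dual_certificate 6 dual_functionals_6"
  "dual_certificate 7 dual_functionals_7" "dual_certificate 8 dual_functionals_8"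
  "dual_certificate 9 dual_functionals_9" "dual_certificate 10 dual_functionals_10"
  by code_simp+

theorem mainTheorem1:
  fixes d :: nat
  assumes "5 \<le> d" and "d \<le> 10"
  shows "\<exists>f \<in> S_deg (scale_deg d D1 + scale_deg 3 D2). nondegenerate f \<and>
           (\<exists>\<eta> \<in> S_deg (scale_deg d D1 + scale_deg 3 D2).
              IVHS_rank (scale_deg d D1 + scale_deg 3 D2) f \<eta> = 2 * d - 5)"
proof -
  have "d \<in> {5, 6, 7, 8, 9, 10}" using assms by auto
  then obtain ls where "dual_certificate d ls" using dual_certificate_instances by auto
  with assms show ?thesis by (intro IVHS_rank_eq_genus_if_dual_certificate) auto
qed

end
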